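(* Let $Y$ be an integrable random sup-measure on $E$. Then almost surely $Y$ is a scaled indicator sup-measure, i.e. $Y(\cdot)=c\,\mathbf 1_{F\cap\,\cdot\,\neq\emptyset}$ for some (random) $c\ge0$ and closed $F\subset E$, if and only if $$\mathbb E\int^e f\,dY=\mathbb E\int f\,dY\qquad\text{for all } f\in\mathrm{USC}.$$
   Context: $E$ is a locally compact Hausdorff second countable space; $\mathcal K$ its compact subsets. A sup-measure on $E$ is a Choquet capacity $\varphi$ (non-decreasing, $\varphi(\emptyset)=0$, $\varphi(A_n)\uparrow\varphi(A)$ if $A_n\uparrow A$, $\varphi(K_n)\downarrow\varphi(K)$ for compact $K_n\downarrow K$), finite on compacts, with $\varphi(\bigcup_j G_j)=\sup_j\varphi(G_j)$ for all families of open sets; a random sup-measure is a random element of the space of sup-measures (Borel $\sigma$-algebra of the sup-vague topology); $Y$ is integrable if $\mathbb E\,Y(K)<\infty$ for all $K\in\mathcal K$. $\mathrm{USC}$: bounded non-negative upper semicontinuous functions on $E$ with relatively compact support. For $f\in\mathrm{USC}$: extremal integral $\int^e f\,d\varphi=\sup\{\varphi(K)\inf_{x\in K}f(x):K\in\mathcal K\}$; Choquet integral $\int f\,d\varphi=\int_0^\infty\varphi(\{f\ge t\})\,dt$. *)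

theory Defs
  imports "HOL-Analysis.Analysis" "HOL-Probability.Probability"
begin

definition choquet_capacity :: "('a::topological_space set \<Rightarrow> ennreal) \<Rightarrow> bool" where
  "choquet_capacity \<phi> \<longleftrightarrow>
     (\<forall>A B. A \<subseteq> B \<longrightarrow> \<phi> A \<le> \<phi> B) \<and>
     \<phi> {} = 0 \<and>
     (\<forall>A :: nat \<Rightarrow> 'a set. incseq A \<longrightarrow> (\<lambda>n. \<phi> (A n)) \<longlonglongrightarrow> \<phi> (\<Union>n. A n)) \<and>
     (\<forall>K :: nat \<Rightarrow> 'a set. (\<forall>n. compact (K n)) \<and> decseq K \<longrightarrow>
          (\<lambda>n. \<phi> (K n)) \<longlonglongrightarrow> \<phi> (\<Inter>n. K n))"

definition sup_measure :: "('a::topological_space set \<Rightarrow> ennreal) \<Rightarrow> bool" where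
  "sup_measure \<phi> \<longleftrightarrow> choquet_capacity \<phi> \<and>
     (\<forall>K. compact K \<longrightarrow> \<phi> K < \<infinity>) \<and>
     (\<forall>\<G>. (\<forall>G\<in>\<G>. open G) \<longrightarrow> \<phi> (\<Union>\<G>) = (SUP G\<in>\<G>. \<phi> G))"

definition sup_measures :: "('a::topological_space set \<Rightarrow> ennreal) set" where
  "sup_measures = {\<phi>. sup_measure \<phi>}"

definition sup_vague_topology :: "('a::topological_space set \<Rightarrow> ennreal) topology" where
  "sup_vague_topology = topology_generated_by
     ({{\<phi>\<in>sup_measures. \<phi> K < x} | K x. compact K} \<union>
      {{\<phi>\<in>sup_measures. x < \<phi> G} | G x. open G})"

definition sup_vague_borel :: "('a::topological_space set \<Rightarrow> ennreal) measure" where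
  "sup_vague_borel = sigma (topspace sup_vague_topology) {U. openin sup_vague_topology U}"

definition random_sup_measure :: "'w measure \<Rightarrow> ('w \<Rightarrow> 'a::topological_space set \<Rightarrow> ennreal) \<Rightarrow> bool" where
  "random_sup_measure M Y \<longleftrightarrow> Y \<in> M \<rightarrow>\<^sub>M sup_vague_borel"

definition integrable_rsm :: "'w measure \<Rightarrow> ('w \<Rightarrow> 'a::topological_space set \<Rightarrow> ennreal) \<Rightarrow> bool" where
  "integrable_rsm M Y \<longleftrightarrow> (\<forall>K. compact K \<longrightarrow> (\<integral>\<^sup>+ w. Y w K \<partial>M) < \<infinity>)"

definition USC :: "('a::topological_space \<Rightarrow> real) set" where
  "USC = {f. bounded (range f) \<and> (\<forall>x. 0 \<le> f x) \<and>
             (\<forall>t. closed {x. t \<le> f x}) \<and> compact (closure {x. f x \<noteq> 0})}"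

definition extremal_integral :: "('a::topological_space \<Rightarrow> real) \<Rightarrow> ('a set \<Rightarrow> ennreal) \<Rightarrow> ennreal" where
  "extremal_integral f \<phi> = (SUP K\<in>{K. compact K}. \<phi> K * ennreal (INF x\<in>K. f x))"

definition choquet_integral :: "('a \<Rightarrow> real) \<Rightarrow> ('a set \<Rightarrow> ennreal) \<Rightarrow> ennreal" where
  "choquet_integral f \<phi> = (\<integral>\<^sup>+ t\<in>{0..}. \<phi> {x. t \<le> f x} \<partial>lborel)"

definition scaled_indicator_sup_measure :: "('a::topological_space set \<Rightarrow> ennreal) \<Rightarrow> bool" where
  "scaled_indicator_sup_measure \<phi> \<longleftrightarrow>
     (\<exists>c::real. \<exists>F. c \<ge> 0 \<and> closed F \<and>
        (\<forall>A. \<phi> A = (if F \<inter> A \<noteq> {} then ennreal c else 0)))"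

end

theory Submission
  imports Defs
begin

text \<open>For compact \<open>K\<close>, \<open>L\<close> the Choquet integral of \<open>\<one>\<^sub>K + \<one>\<^sub>L\<close> against a sup-measure
  \<open>\<phi>\<close> is \<open>\<phi>(K \<union> L) + \<phi>(K \<inter> L)\<close>, whereas its extremal integral is at most
  \<open>max (\<phi>(K \<union> L)) (2 \<phi>(K \<inter> L))\<close>. Equal expectations and integrability therefore give,
  almost surely, \<open>Y(K \<inter> L) \<in> {0, Y(K \<union> L)}\<close>, simultaneously for the countably many pairs
  built from a countable basis of relatively compact open sets. Such a dichotomy forces \<open>Y\<close> to
  equal \<open>Y(E)\<close> at every point of its support and \<open>0\<close> off it, i.e. to be a scaled indicator.
  Conversely, both integrals of \<open>f\<close> against \<open>c \<one>\<^bsub>F \<inter> \<cdot> \<noteq> {}\<^esub>\<close> equal \<open>c sup\<^sub>F f\<close>.\<close>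

lemma ennreal_cSUP:
  assumes "A \<noteq> {}" "bdd_above (f ` A)"
  shows "ennreal (SUP a\<in>A. f a) = (SUP a\<in>A. ennreal (f a))"
proof (rule ennreal_SUP[OF _ assms(1)])
  have "(SUP a\<in>A. ennreal (f a)) \<le> ennreal (SUP a\<in>A. f a)"
    using assms(2) by (intro SUP_least ennreal_leI cSUP_upper)
  then show "(SUP a\<in>A. ennreal (f a)) \<noteq> \<top>"
    by (rule neq_top_trans[OF ennreal_neq_top])
qed

lemma ennreal_add_le_max_double_cases:
  fixes a b :: ennreal
  assumes "a < \<top>" "b \<le> a" "a + b \<le> max a (2 * b)"
  shows "b = 0 \<or> b = a"
proof -
  obtain x where x: "0 \<le> x" "a = ennreal x" using assms(1) by (cases a) auto
  obtain y where y: "0 \<le> y" "b = ennreal y" using assms(1,2) by (cases b) auto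
  have "2 * b = ennreal (2 * y)" using y by (simp add: ennreal_mult)
  then have "max a (2 * b) = ennreal (max x (2 * y))" using x y
    by (auto simp: max_def ennreal_le_iff)
  moreover have "a + b = ennreal (x + y)" using x y by simp
  ultimately have "x + y \<le> max x (2 * y)" using assms(3) x y
    by (metis ennreal_le_iff le_max_iff_disj max_def order.trans)
  then have "y = 0 \<or> y = x" using assms(2) x y by (auto simp: max_def split: if_splits)
  then show ?thesis using x y by auto
qed

lemma AE_le_of_nn_integral_le:
  assumes "f \<in> borel_measurable M" "g \<in> borel_measurable M"
    and "(\<integral>\<^sup>+ x. f x \<partial>M) \<noteq> \<infinity>" "AE x in M. f x \<le> g x"
    and "(\<integral>\<^sup>+ x. g x \<partial>M) \<le> (\<integral>\<^sup>+ x. f x \<partial>M)"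
  shows "AE x in M. g x \<le> f x"
proof (rule ccontr)
  assume "\<not> (AE x in M. g x \<le> f x)"
  then have "(\<integral>\<^sup>+ x. f x \<partial>M) < (\<integral>\<^sup>+ x. g x \<partial>M)" by (rule nn_integral_less[OF assms(1-4)])
  then show False using assms(5) by simp
qed

lemma space_sup_vague_borel: "space sup_vague_borel = topspace sup_vague_topology"
  unfolding sup_vague_borel_def by (rule space_measure_of) (auto dest: openin_subset)

lemma sets_sup_vague_borel_openin:
  "openin sup_vague_topology U \<Longrightarrow> U \<in> sets sup_vague_borel"
  unfolding sup_vague_borel_def by (subst sets_measure_of) (auto dest: openin_subset)

lemma topspace_sup_vague_topology: "topspace sup_vague_topology \<subseteq> sup_measures"
  unfolding sup_vague_topology_def by auto

lemma random_sup_measure_sup_measure: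
  assumes "random_sup_measure M Y" "w \<in> space M"
  shows "sup_measure (Y w)"
proof -
  have "Y w \<in> space sup_vague_borel"
    using assms(1) measurable_space[OF _ assms(2)] unfolding random_sup_measure_def by metis
  then show ?thesis
    using topspace_sup_vague_topology space_sup_vague_borel unfolding sup_measures_def by auto
qed

lemma random_sup_measure_borel_measurable:
  assumes "random_sup_measure M Y" "compact K"
  shows "(\<lambda>w. Y w K) \<in> borel_measurable M"
proof (rule borel_measurableI_less)
  fix x :: ennreal
  let ?U = "{\<phi>\<in>sup_measures. \<phi> K < x}"
  have "openin sup_vague_topology ?U"
    unfolding sup_vague_topology_def openin_topology_generated_by_iff
    using assms(2) by (intro generate_topology_on.Basis) blast
  then have "Y -` ?U \<inter> space M \<in> sets M"
    using assms(1) unfolding random_sup_measure_def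
    by (rule measurable_sets[OF _ sets_sup_vague_borel_openin, rotated])
  moreover have "Y -` ?U \<inter> space M = {w\<in>space M. Y w K < x}"
    using random_sup_measure_sup_measure[OF assms(1)] unfolding sup_measures_def by auto
  ultimately show "{w\<in>space M. Y w K < x} \<in> sets M" by simp
qed

lemma sup_measure_mono: "sup_measure \<phi> \<Longrightarrow> A \<subseteq> B \<Longrightarrow> \<phi> A \<le> \<phi> B"
  unfolding sup_measure_def choquet_capacity_def by simp

lemma sup_measure_empty: "sup_measure \<phi> \<Longrightarrow> \<phi> {} = 0"
  unfolding sup_measure_def choquet_capacity_def by simp

lemma sup_measure_incseq:
  "sup_measure \<phi> \<Longrightarrow> incseq A \<Longrightarrow> (\<lambda>n. \<phi> (A n)) \<longlonglongrightarrow> \<phi> (\<Union>n. A n)"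
  unfolding sup_measure_def choquet_capacity_def by simp

lemma sup_measure_decseq_compact:
  "sup_measure \<phi> \<Longrightarrow> (\<And>n. compact (K n)) \<Longrightarrow> decseq K \<Longrightarrow> (\<lambda>n. \<phi> (K n)) \<longlonglongrightarrow> \<phi> (\<Inter>n. K n)"
  unfolding sup_measure_def choquet_capacity_def by simp

lemma sup_measure_compact_finite: "sup_measure \<phi> \<Longrightarrow> compact K \<Longrightarrow> \<phi> K < \<infinity>"
  unfolding sup_measure_def by simp

lemma sup_measure_Union_open:
  "sup_measure \<phi> \<Longrightarrow> (\<And>G. G \<in> \<G> \<Longrightarrow> open G) \<Longrightarrow> \<phi> (\<Union>\<G>) = (SUP G\<in>\<G>. \<phi> G)"
  unfolding sup_measure_def by simp

lemma sup_measure_zero_or_UNIV: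
  assumes sm: "sup_measure \<phi>" and D: "incseq D" "(\<Union>m. D m) = UNIV"
    and dich: "\<And>m. \<phi> K = 0 \<or> \<phi> K = \<phi> (K \<union> D m)"
  shows "\<phi> K = 0 \<or> \<phi> K = \<phi> UNIV"
proof (cases "\<phi> K = 0")
  case False
  have "incseq (\<lambda>m. K \<union> D m)" using D(1) by (auto simp: incseq_def)
  then have "(\<lambda>m. \<phi> (K \<union> D m)) \<longlonglongrightarrow> \<phi> (\<Union>m. K \<union> D m)" by (rule sup_measure_incseq[OF sm])
  moreover have "(\<Union>m. K \<union> D m) = UNIV" using D(2) by blast
  ultimately have "(\<lambda>m. \<phi> K) \<longlonglongrightarrow> \<phi> UNIV" using dich False by simp
  then show ?thesis by (simp add: LIMSEQ_const_iff)
qed simp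

lemma USC_nonneg: "f \<in> USC \<Longrightarrow> 0 \<le> f x"
  unfolding USC_def by blast

lemma USC_bdd_above:
  assumes "f \<in> USC" shows "bdd_above (f ` A)"
proof -
  have "bounded (range f)" using assms unfolding USC_def by simp
  then have "bdd_above (range f)" by (rule bounded_imp_bdd_above)
  then show ?thesis by (rule bdd_above_mono) blast
qed

lemma extremal_integral_scaled_indicator:
  assumes f: "f \<in> USC" and "F \<noteq> {}"
    and \<phi>: "\<And>A. \<phi> A = (if F \<inter> A \<noteq> {} then ennreal c else 0)"
  shows "extremal_integral f \<phi> = ennreal c * ennreal (SUP x\<in>F. f x)"
proof (rule antisym)
  have bdd: "bdd_above (f ` F)" using f by (rule USC_bdd_above)
  show "extremal_integral f \<phi> \<le> ennreal c * ennreal (SUP x\<in>F. f x)"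
    unfolding extremal_integral_def
  proof (rule SUP_least)
    fix K :: "'a set"
    show "\<phi> K * ennreal (INF x\<in>K. f x) \<le> ennreal c * ennreal (SUP x\<in>F. f x)"
    proof (cases "F \<inter> K = {}")
      case False
      then obtain x where x: "x \<in> F" "x \<in> K" by blast
      have "(INF x\<in>K. f x) \<le> f x"
        using x(2) USC_nonneg[OF f] by (intro cINF_lower bdd_belowI2)
      also have "\<dots> \<le> (SUP x\<in>F. f x)" using x(1) bdd by (rule cSUP_upper)
      finally show ?thesis using \<phi> False by (auto intro!: mult_left_mono ennreal_leI)
    qed (use \<phi> in simp)
  qed
  have "ennreal (SUP x\<in>F. f x) = (SUP x\<in>F. ennreal (f x))"
    using \<open>F \<noteq> {}\<close> bdd by (rule ennreal_cSUP)
  then have "ennreal c * ennreal (SUP x\<in>F. f x) = (SUP x\<in>F. \<phi> {x} * ennreal (INF y\<in>{x}. f y))"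
    using \<phi> by (simp add: SUP_mult_left_ennreal)
  also have "\<dots> \<le> extremal_integral f \<phi>"
    unfolding extremal_integral_def by (rule SUP_mono) (use compact_sing in blast)
  finally show "ennreal c * ennreal (SUP x\<in>F. f x) \<le> extremal_integral f \<phi>" .
qed

lemma choquet_integral_scaled_indicator:
  assumes f: "f \<in> USC" and "F \<noteq> {}"
    and \<phi>: "\<And>A. \<phi> A = (if F \<inter> A \<noteq> {} then ennreal c else 0)"
  shows "choquet_integral f \<phi> = ennreal c * ennreal (SUP x\<in>F. f x)"
proof -
  define s where "s = (SUP x\<in>F. f x)"
  have bdd: "bdd_above (f ` F)" using f by (rule USC_bdd_above)
  have "0 \<le> s"
    using \<open>F \<noteq> {}\<close> USC_nonneg[OF f] cSUP_upper[OF _ bdd] unfolding s_def by (metis ex_in_conv order_trans)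
  have "AE t in lborel. \<phi> {x. t \<le> f x} * indicator {0..} t = ennreal c * indicator {0<..<s} t"
    using AE_lborel_singleton[of 0] AE_lborel_singleton[of s]
  proof eventually_elim
    case (elim t)
    consider "t < 0" | "0 < t" "t < s" | "0 < t" "s < t"
      using elim by fastforce
    then show ?case
    proof cases
      case 2
      then obtain x where "x \<in> F" "t < f x"
        using less_cSUP_iff[OF \<open>F \<noteq> {}\<close> bdd] unfolding s_def by auto
      then have "F \<inter> {x. t \<le> f x} \<noteq> {}" by auto
      then show ?thesis using \<phi> 2 by simp
    next
      case 3
      then have "F \<inter> {x. t \<le> f x} = {}"
        using cSUP_upper[OF _ bdd] unfolding s_def by force
      then show ?thesis using \<phi> 3 by simp
    qed simp
  qed
  then have "choquet_integral f \<phi> = (\<integral>\<^sup>+ t. ennreal c * indicator {0<..<s} t \<partial>lborel)"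
    unfolding choquet_integral_def by (rule nn_integral_cong_AE)
  also have "\<dots> = ennreal c * ennreal s"
    using \<open>0 \<le> s\<close> by (simp add: nn_integral_cmult_indicator)
  finally show ?thesis unfolding s_def .
qed

lemma scaled_indicator_extremal_integral_eq_choquet_integral:
  assumes "scaled_indicator_sup_measure \<phi>" "f \<in> USC"
  shows "extremal_integral f \<phi> = choquet_integral f \<phi>"
proof -
  obtain c F where \<phi>: "\<And>A. \<phi> A = (if F \<inter> A \<noteq> {} then ennreal c else 0)"
    using assms(1) unfolding scaled_indicator_sup_measure_def by blast
  show ?thesis
  proof (cases "F = {}")
    case True
    then have "\<phi> = (\<lambda>_. 0)" using \<phi> by auto
    then show ?thesis unfolding extremal_integral_def choquet_integral_def by (simp add: SUP_constant bot_ennreal)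
  next
    case False
    then show ?thesis
      using extremal_integral_scaled_indicator[OF assms(2) False \<phi>]
        choquet_integral_scaled_indicator[OF assms(2) False \<phi>] by simp
  qed
qed

lemma indicator_add_indicator_superlevel:
  "{x. t \<le> indicator K x + indicator L x} =
    (if t \<le> 0 then UNIV else if t \<le> 1 then K \<union> L else if t \<le> (2::real) then K \<inter> L else {})"
  by (auto simp: indicator_def)

lemma indicator_add_indicator_USC:
  fixes K L :: "'a::t2_space set"
  assumes "compact K" "compact L"
  shows "(\<lambda>x. indicator K x + indicator L x :: real) \<in> USC"
proof -
  have "bounded (range (\<lambda>x. indicator K x + indicator L x :: real))"
    unfolding bounded_iff by (rule exI[of _ 2]) (auto simp: indicator_def)
  moreover have "closed {x. t \<le> indicator K x + indicator L x}" for t :: real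
    unfolding indicator_add_indicator_superlevel using assms by (auto intro: compact_imp_closed)
  moreover have "{x. indicator K x + indicator L x \<noteq> (0::real)} = K \<union> L"
    by (auto simp: indicator_def)
  then have "compact (closure {x. indicator K x + indicator L x \<noteq> (0::real)})"
    using assms by (simp add: compact_imp_closed closure_closed compact_Un)
  ultimately show ?thesis unfolding USC_def by auto
qed

lemma choquet_integral_indicator_add_indicator:
  assumes "\<phi> {} = 0"
  shows "choquet_integral (\<lambda>x. indicator K x + indicator L x) \<phi> = \<phi> (K \<union> L) + \<phi> (K \<inter> L)"
proof -
  have "AE t in lborel. \<phi> {x. (t::real) \<le> indicator K x + indicator L x} * indicator {0..} t =
     \<phi> (K \<union> L) * indicator {0<..1} t + \<phi> (K \<inter> L) * indicator {1<..2} t"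
    using AE_lborel_singleton[of "0::real"]
    by eventually_elim (auto simp: indicator_add_indicator_superlevel assms split: split_indicator)
  then have "choquet_integral (\<lambda>x. indicator K x + indicator L x) \<phi> =
     (\<integral>\<^sup>+ t. \<phi> (K \<union> L) * indicator {0<..1} t + \<phi> (K \<inter> L) * indicator {1<..2::real} t \<partial>lborel)"
    unfolding choquet_integral_def by (rule nn_integral_cong_AE)
  also have "\<dots> = \<phi> (K \<union> L) + \<phi> (K \<inter> L)"
    by (simp add: nn_integral_add nn_integral_cmult_indicator)
  finally show ?thesis .
qed

text \<open>A compact set \<open>C\<close> on which \<open>\<one>\<^sub>K + \<one>\<^sub>L\<close> has infimum \<open>i > 0\<close> lies in \<open>K \<union> L\<close>,
  and even in \<open>K \<inter> L\<close> if \<open>i > 1\<close>.\<close>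

lemma extremal_integral_indicator_add_indicator_le:
  assumes "sup_measure \<phi>"
  shows "extremal_integral (\<lambda>x. indicator K x + indicator L x) \<phi> \<le> max (\<phi> (K \<union> L)) (2 * \<phi> (K \<inter> L))"
  unfolding extremal_integral_def
proof (rule SUP_least)
  fix C :: "'a set"
  let ?f = "\<lambda>x. indicator K x + indicator L x :: real"
  have lower: "(INF x\<in>C. ?f x) \<le> ?f x" if "x \<in> C" for x
    using that by (intro cINF_lower bdd_belowI2[where m=0]) (auto simp: indicator_def)
  consider "C \<subseteq> K \<inter> L" | x where "x \<in> C" "x \<notin> K \<inter> L" "C \<subseteq> K \<union> L" | y where "y \<in> C" "y \<notin> K \<union> L"
    by blast
  then show "\<phi> C * ennreal (INF x\<in>C. ?f x) \<le> max (\<phi> (K \<union> L)) (2 * \<phi> (K \<inter> L))"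
  proof cases
    case 1
    show ?thesis
    proof (cases "C = {}")
      case False
      then obtain x where "x \<in> C" by blast
      then have "(INF x\<in>C. ?f x) \<le> 2" using lower 1 by fastforce
      then have "\<phi> C * ennreal (INF x\<in>C. ?f x) \<le> \<phi> (K \<inter> L) * ennreal 2"
        using sup_measure_mono[OF assms 1] by (intro mult_mono ennreal_leI) auto
      then show ?thesis by (simp add: mult.commute le_max_iff_disj)
    qed (simp add: sup_measure_empty[OF assms])
  next
    case 2
    then have "(INF x\<in>C. ?f x) \<le> 1" using lower[of x] by (auto simp: indicator_def)
    then have "\<phi> C * ennreal (INF x\<in>C. ?f x) \<le> \<phi> (K \<union> L) * ennreal 1"
      using sup_measure_mono[OF assms 2(3)] by (intro mult_mono ennreal_leI) auto
    then show ?thesis by (simp add: le_max_iff_disj)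
  next
    case 3
    then have "(INF x\<in>C. ?f x) \<le> 0" using lower[of y] by (auto simp: indicator_def)
    then have "ennreal (INF x\<in>C. ?f x) = 0" by (simp add: ennreal_eq_0_iff)
    then show ?thesis by simp
  qed
qed

lemma AE_random_sup_measure_dichotomy:
  fixes Y :: "'w \<Rightarrow> 'a::t2_space set \<Rightarrow> ennreal"
  assumes rsm: "random_sup_measure M Y" and int: "integrable_rsm M Y"
    and K: "compact K" and L: "compact L"
    and eq: "(\<integral>\<^sup>+ w. extremal_integral (\<lambda>x. indicator K x + indicator L x) (Y w) \<partial>M) =
             (\<integral>\<^sup>+ w. choquet_integral (\<lambda>x. indicator K x + indicator L x) (Y w) \<partial>M)"
  shows "AE w in M. Y w (K \<inter> L) = 0 \<or> Y w (K \<inter> L) = Y w (K \<union> L)"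
proof -
  define a where "a w = Y w (K \<union> L)" for w
  define b where "b w = Y w (K \<inter> L)" for w
  define g where "g w = max (a w) (2 * b w)" for w
  have [measurable]: "a \<in> borel_measurable M" "b \<in> borel_measurable M"
    unfolding a_def b_def using K L
    by (auto intro!: random_sup_measure_borel_measurable[OF rsm] compact_Un compact_Int)
  have [measurable]: "g \<in> borel_measurable M" unfolding g_def by measurable
  have sm: "sup_measure (Y w)" if "w \<in> space M" for w
    using rsm that by (rule random_sup_measure_sup_measure)
  have ba: "b w \<le> a w" if "w \<in> space M" for w
    unfolding a_def b_def using sm[OF that] by (rule sup_measure_mono) blast
  have "(\<integral>\<^sup>+ w. a w + b w \<partial>M) = (\<integral>\<^sup>+ w. extremal_integral (\<lambda>x. indicator K x + indicator L x) (Y w) \<partial>M)"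
    unfolding eq a_def b_def
    by (intro nn_integral_cong choquet_integral_indicator_add_indicator[symmetric] sup_measure_empty sm)
  also have "\<dots> \<le> (\<integral>\<^sup>+ w. g w \<partial>M)"
    unfolding g_def a_def b_def
    by (intro nn_integral_mono extremal_integral_indicator_add_indicator_le sm)
  finally have ab_le_g: "(\<integral>\<^sup>+ w. a w + b w \<partial>M) \<le> (\<integral>\<^sup>+ w. g w \<partial>M)" .
  have g_le_ab: "AE w in M. g w \<le> a w + b w"
    using ba unfolding g_def by (auto simp: mult_2 intro: add_right_mono)
  have a_fin: "(\<integral>\<^sup>+ w. a w \<partial>M) < \<infinity>" and b_fin: "(\<integral>\<^sup>+ w. b w \<partial>M) < \<infinity>"
    using int K L unfolding integrable_rsm_def a_def b_def by (auto intro: compact_Un compact_Int)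
  have "(\<integral>\<^sup>+ w. g w \<partial>M) \<le> (\<integral>\<^sup>+ w. a w + b w \<partial>M)"
    using g_le_ab by (rule nn_integral_mono_AE)
  also have "\<dots> < \<infinity>" using a_fin b_fin by (simp add: nn_integral_add)
  finally have "(\<integral>\<^sup>+ w. g w \<partial>M) \<noteq> \<infinity>" by simp
  moreover have "(\<lambda>w. a w + b w) \<in> borel_measurable M" by measurable
  ultimately have "AE w in M. a w + b w \<le> g w"
    using g_le_ab ab_le_g by (intro AE_le_of_nn_integral_le[OF \<open>g \<in> borel_measurable M\<close>])
  moreover have "AE w in M. a w \<noteq> \<infinity>" using a_fin by (intro nn_integral_noteq_infinite) auto
  moreover have "AE w in M. w \<in> space M" by (rule AE_space)
  ultimately show ?thesis
  proof eventually_elim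
    case (elim w)
    then show ?case
      using ennreal_add_le_max_double_cases[of "a w" "b w"] ba[of w]
      unfolding g_def a_def b_def by (simp add: top.not_eq_extremum)
  qed
qed

locale precompact_basis =
  fixes B :: "'a::t2_space set set"
  assumes countable_basis: "countable B"
    and open_basis: "U \<in> B \<Longrightarrow> open U"
    and compact_closure_basis: "U \<in> B \<Longrightarrow> compact (closure U)"
    and basis: "open S \<Longrightarrow> x \<in> S \<Longrightarrow> \<exists>U\<in>B. x \<in> U \<and> U \<subseteq> S"

lemma locally_compact_precompact_basis:
  assumes "locally_compact_space (euclidean :: 'a topology)"
  obtains B :: "'a::{t2_space, second_countable_topology} set set" where "precompact_basis B"
proof -
  obtain B0 :: "'a set set" where B0: "countable B0" "topological_basis B0"
    using ex_countable_basis by blast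
  define B where "B = {U\<in>B0. compact (closure U)}"
  have "\<exists>U\<in>B. x \<in> U \<and> U \<subseteq> S" if S: "open S" "x \<in> S" for S x
  proof -
    obtain V K where VK: "open V" "compact K" "x \<in> V" "V \<subseteq> K"
      using assms unfolding locally_compact_space_def by (metis UNIV_I compactin_euclidean_iff
          open_openin topspace_euclidean)
    obtain U where U: "U \<in> B0" "x \<in> U" "U \<subseteq> V \<inter> S"
      using topological_basisE[OF B0(2), of "V \<inter> S" x] VK S by blast
    have "closure U \<subseteq> K"
      using U(3) VK(2,4) by (intro closure_minimal compact_imp_closed) auto
    then have "compact (closure U)"
      using compact_Int_closed[OF VK(2) closed_closure, of U] by (simp add: inf.absorb2)
    then show ?thesis using U unfolding B_def by blast
  qed
  moreover have "countable B" using B0(1) unfolding B_def by simp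
  moreover have "open U" if "U \<in> B" for U
    using that topological_basis_open[OF B0(2)] unfolding B_def by blast
  ultimately show ?thesis
    by (intro that) (unfold_locales, auto simp: B_def)
qed

context precompact_basis
begin

lemma compact_Inter_closure:
  assumes "T \<noteq> {}" "T \<subseteq> B"
  shows "compact (\<Inter>(closure ` T))"
proof -
  obtain U where "U \<in> T" using assms(1) by blast
  then have "\<Inter>(closure ` T) = closure U \<inter> \<Inter>(closure ` T)" by blast
  moreover have "compact (closure U \<inter> \<Inter>(closure ` T))"
    using \<open>U \<in> T\<close> assms(2) by (intro compact_Int_closed compact_closure_basis closed_Inter) auto
  ultimately show ?thesis by simp
qed

lemma compact_Union_closure:
  assumes "finite S" "S \<subseteq> B"
  shows "compact (\<Union>(closure ` S))"
  using assms compact_closure_basis by (intro compact_Union) auto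

lemma exhausting_finite_subsets:
  obtains S :: "nat \<Rightarrow> 'a set set"
  where "\<And>m. finite (S m)" "\<And>m. S m \<subseteq> B"
    "incseq (\<lambda>m. \<Union>(closure ` S m))" "(\<Union>m. \<Union>(closure ` S m)) = UNIV"
proof
  have "B \<noteq> {}" using basis[of UNIV] by blast
  define b where "b = from_nat_into B"
  show "finite (b ` {..<m})" "b ` {..<m} \<subseteq> B" for m
    using from_nat_into[OF \<open>B \<noteq> {}\<close>] unfolding b_def by auto
  show "incseq (\<lambda>m. \<Union>(closure ` b ` {..<m}))"
    by (intro monoI Union_mono image_mono) auto
  have "x \<in> (\<Union>m. \<Union>(closure ` b ` {..<m}))" for x
  proof -
    obtain U where "U \<in> B" "x \<in> U" using basis[of UNIV x] by auto
    moreover obtain i where "b i = U"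
      using from_nat_into_surj[OF countable_basis \<open>U \<in> B\<close>] unfolding b_def by blast
    ultimately show ?thesis using closure_subset by blast
  qed
  then show "(\<Union>m. \<Union>(closure ` b ` {..<m})) = UNIV" by blast
qed

lemma shrinking_finite_subsets:
  obtains T :: "nat \<Rightarrow> 'a set set"
  where "\<And>n. finite (T n)" "\<And>n. T n \<noteq> {}" "\<And>n. T n \<subseteq> {U\<in>B. x \<in> U}"
    "decseq (\<lambda>n. \<Inter>(closure ` T n))" "(\<Inter>n. \<Inter>(closure ` T n)) = {x}"
proof
  define Bx where "Bx = {U\<in>B. x \<in> U}"
  have "Bx \<noteq> {}" using basis[of UNIV x] unfolding Bx_def by auto
  define u where "u = from_nat_into Bx"
  show "finite (u ` {..n})" "u ` {..n} \<noteq> {}" "u ` {..n} \<subseteq> Bx" for n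
    using from_nat_into[OF \<open>Bx \<noteq> {}\<close>] unfolding u_def by auto
  show "decseq (\<lambda>n. \<Inter>(closure ` u ` {..n}))"
    by (intro antimonoI Inter_anti_mono image_mono) auto
  have "y = x" if y: "y \<in> (\<Inter>n. \<Inter>(closure ` u ` {..n}))" for y
  proof (rule ccontr)
    assume "y \<noteq> x"
    then obtain V W where VW: "open V" "open W" "x \<in> V" "y \<in> W" "V \<inter> W = {}"
      using hausdorff by metis
    obtain U where U: "U \<in> B" "x \<in> U" "U \<subseteq> V" using basis[OF VW(1,3)] by blast
    then obtain i where "u i = U"
      using from_nat_into_surj[of Bx U] countable_basis unfolding u_def Bx_def by auto
    then have "y \<in> closure U" using y by blast
    moreover have "W \<inter> closure U = {}"
      using VW U(3) open_Int_closure_eq_empty[OF VW(2), of U] by blast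
    ultimately show False using VW(4) by blast
  qed
  moreover have "x \<in> closure U" if "U \<in> Bx" for U
    using that closure_subset unfolding Bx_def by blast
  ultimately show "(\<Inter>n. \<Inter>(closure ` u ` {..n})) = {x}"
    using from_nat_into[OF \<open>Bx \<noteq> {}\<close>] unfolding u_def by blast
qed

lemma sup_measure_singleton_eq:
  assumes sm: "sup_measure \<phi>" and x: "\<And>U. U \<in> B \<Longrightarrow> x \<in> U \<Longrightarrow> \<phi> U \<noteq> 0"
    and vals: "\<And>T. finite T \<Longrightarrow> T \<noteq> {} \<Longrightarrow> T \<subseteq> B \<Longrightarrow>
      \<phi> (\<Inter>(closure ` T)) = 0 \<or> \<phi> (\<Inter>(closure ` T)) = c"
  shows "\<phi> {x} = c"
proof -
  obtain T :: "nat \<Rightarrow> 'a set set"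
    where T: "\<And>n. finite (T n)" "\<And>n. T n \<noteq> {}" "\<And>n. T n \<subseteq> {U\<in>B. x \<in> U}"
    "decseq (\<lambda>n. \<Inter>(closure ` T n))" "(\<Inter>n. \<Inter>(closure ` T n)) = {x}"
    using shrinking_finite_subsets[of x] by blast
  have "\<phi> (\<Inter>(closure ` T n)) = c" for n
  proof -
    have "open (\<Inter>(T n))" using T(1,3) open_basis by (intro open_Inter) auto
    moreover have "x \<in> \<Inter>(T n)" using T(3) by blast
    ultimately obtain U where U: "U \<in> B" "x \<in> U" "U \<subseteq> \<Inter>(T n)" using basis by blast
    then have "U \<subseteq> \<Inter>(closure ` T n)" using closure_subset by blast
    then have "\<phi> U \<le> \<phi> (\<Inter>(closure ` T n))" by (rule sup_measure_mono[OF sm])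
    then have "\<phi> (\<Inter>(closure ` T n)) \<noteq> 0" using x[OF U(1,2)] by auto
    moreover have "T n \<subseteq> B" using T(3) by blast
    then have "\<phi> (\<Inter>(closure ` T n)) = 0 \<or> \<phi> (\<Inter>(closure ` T n)) = c"
      by (rule vals[OF T(1,2)])
    ultimately show ?thesis by simp
  qed
  moreover have "compact (\<Inter>(closure ` T n))" for n
    using T(2,3) by (intro compact_Inter_closure) auto
  then have "(\<lambda>n. \<phi> (\<Inter>(closure ` T n))) \<longlonglongrightarrow> \<phi> (\<Inter>n. \<Inter>(closure ` T n))"
    using T(4) by (rule sup_measure_decseq_compact[OF sm])
  ultimately show ?thesis using T(5) by (simp add: LIMSEQ_const_iff)
qed

text \<open>The support \<open>F\<close> is the complement of the union of the \<open>\<phi>\<close>-null basic open sets. By the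
  dichotomy \<open>\<phi>\<close> takes only the values \<open>0\<close> and \<open>\<phi>(E)\<close> on finite intersections of basic
  compacts, hence, by continuity along compacts shrinking to a point, on the points of \<open>F\<close>.\<close>

lemma scaled_indicator_sup_measureI:
  assumes sm: "sup_measure \<phi>"
    and dich: "\<And>T S. finite T \<Longrightarrow> T \<noteq> {} \<Longrightarrow> T \<subseteq> B \<Longrightarrow> finite S \<Longrightarrow> S \<subseteq> B \<Longrightarrow>
      \<phi> (\<Inter>(closure ` T)) = 0 \<or> \<phi> (\<Inter>(closure ` T)) = \<phi> (\<Inter>(closure ` T) \<union> \<Union>(closure ` S))"
  shows "scaled_indicator_sup_measure \<phi>"
proof -
  obtain S :: "nat \<Rightarrow> 'a set set" where S: "\<And>m. finite (S m)" "\<And>m. S m \<subseteq> B"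
    "incseq (\<lambda>m. \<Union>(closure ` S m))" "(\<Union>m. \<Union>(closure ` S m)) = UNIV"
    using exhausting_finite_subsets by blast
  have vals: "\<phi> (\<Inter>(closure ` T)) = 0 \<or> \<phi> (\<Inter>(closure ` T)) = \<phi> UNIV"
    if "finite T" "T \<noteq> {}" "T \<subseteq> B" for T
    using sup_measure_zero_or_UNIV[OF sm S(3,4)] dich[OF that S(1,2)] by blast
  define F where "F = - \<Union>{U\<in>B. \<phi> U = 0}"
  have "closed F" unfolding F_def using open_basis by (intro closed_Compl open_Union) auto
  have null: "\<phi> A = 0" if "F \<inter> A = {}" for A
  proof -
    have "\<phi> A \<le> \<phi> (\<Union>{U\<in>B. \<phi> U = 0})"
      using that unfolding F_def by (intro sup_measure_mono[OF sm]) blast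
    also have "\<dots> = 0"
      using open_basis by (subst sup_measure_Union_open[OF sm]) (auto intro: antisym SUP_least)
    finally show ?thesis by simp
  qed
  have point: "\<phi> {x} = \<phi> UNIV" if "x \<in> F" for x
    using that vals unfolding F_def by (intro sup_measure_singleton_eq[OF sm]) auto
  have "\<phi> A = (if F \<inter> A \<noteq> {} then ennreal (enn2real (\<phi> UNIV)) else 0)" for A
  proof (cases "F \<inter> A = {}")
    case False
    then obtain x where x: "x \<in> F" "x \<in> A" by blast
    have "\<phi> UNIV = \<phi> {x}" using point[OF x(1)] by simp
    also have "\<dots> \<le> \<phi> A" using x(2) by (intro sup_measure_mono[OF sm]) auto
    finally have "\<phi> A = \<phi> UNIV"
      using sup_measure_mono[OF sm, of A UNIV] by (simp add: antisym)
    moreover have "\<phi> UNIV < \<infinity>"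
      using point[OF x(1)] sup_measure_compact_finite[OF sm compact_sing, of x] by simp
    ultimately show ?thesis using False by simp
  qed (simp add: null)
  then show ?thesis
    unfolding scaled_indicator_sup_measure_def using \<open>closed F\<close>
    by (intro exI[of _ "enn2real (\<phi> UNIV)"] exI[of _ F]) simp
qed

lemma AE_scaled_indicator_sup_measure:
  fixes Y :: "'w \<Rightarrow> 'a set \<Rightarrow> ennreal"
  assumes rsm: "random_sup_measure M Y" and int: "integrable_rsm M Y"
    and eq: "\<forall>f\<in>USC. (\<integral>\<^sup>+ w. extremal_integral f (Y w) \<partial>M) = (\<integral>\<^sup>+ w. choquet_integral f (Y w) \<partial>M)"
  shows "AE w in M. scaled_indicator_sup_measure (Y w)"
proof -
  define \<T> where "\<T> = {T. finite T \<and> T \<subseteq> B}"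
  have "countable \<T>" unfolding \<T>_def by (rule countable_Collect_finite_subset[OF countable_basis])
  have dich: "AE w in M. T \<noteq> {} \<longrightarrow> Y w (\<Inter>(closure ` T)) = 0 \<or>
      Y w (\<Inter>(closure ` T)) = Y w (\<Inter>(closure ` T) \<union> \<Union>(closure ` S))"
    if "T \<in> \<T>" "S \<in> \<T>" for T S
  proof (cases "T = {}")
    case False
    let ?K = "\<Inter>(closure ` T)" and ?L = "\<Inter>(closure ` T) \<union> \<Union>(closure ` S)"
    have "compact ?K" "compact ?L"
      using that False unfolding \<T>_def by (auto intro: compact_Inter_closure compact_Union_closure)
    then have "AE w in M. Y w (?K \<inter> ?L) = 0 \<or> Y w (?K \<inter> ?L) = Y w (?K \<union> ?L)"
      using eq indicator_add_indicator_USC by (intro AE_random_sup_measure_dichotomy[OF rsm int]) auto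
    moreover have "?K \<inter> ?L = ?K" "?K \<union> ?L = ?L" by auto
    ultimately show ?thesis by simp
  qed simp
  then have "AE w in M. \<forall>T\<in>\<T>. \<forall>S\<in>\<T>. T \<noteq> {} \<longrightarrow> Y w (\<Inter>(closure ` T)) = 0 \<or>
      Y w (\<Inter>(closure ` T)) = Y w (\<Inter>(closure ` T) \<union> \<Union>(closure ` S))"
    using dich by (simp only: AE_ball_countable[OF \<open>countable \<T>\<close>]) blast
  moreover have "AE w in M. w \<in> space M" by (rule AE_space)
  ultimately show ?thesis
  proof eventually_elim
    case (elim w)
    show ?case
      using elim(1) unfolding \<T>_def
      by (intro scaled_indicator_sup_measureI random_sup_measure_sup_measure[OF rsm elim(2)]) auto
  qed
qed

end

theorem mainTheorem10:
  fixes M :: "'w measure"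
    and Y :: "'w \<Rightarrow> ('a::{t2_space, second_countable_topology}) set \<Rightarrow> ennreal"
  assumes "locally_compact_space (euclidean :: 'a topology)"
    and "prob_space M"
    and "random_sup_measure M Y"
    and "integrable_rsm M Y"
  shows "(AE w in M. scaled_indicator_sup_measure (Y w)) \<longleftrightarrow>
         (\<forall>f\<in>USC. (\<integral>\<^sup>+ w. extremal_integral f (Y w) \<partial>M) = (\<integral>\<^sup>+ w. choquet_integral f (Y w) \<partial>M))"
proof
  assume "AE w in M. scaled_indicator_sup_measure (Y w)"
  then show "\<forall>f\<in>USC. (\<integral>\<^sup>+ w. extremal_integral f (Y w) \<partial>M) = (\<integral>\<^sup>+ w. choquet_integral f (Y w) \<partial>M)"
    by (auto intro!: nn_integral_cong_AE elim!: AE_mp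
        simp: scaled_indicator_extremal_integral_eq_choquet_integral)
next
  assume "\<forall>f\<in>USC. (\<integral>\<^sup>+ w. extremal_integral f (Y w) \<partial>M) = (\<integral>\<^sup>+ w. choquet_integral f (Y w) \<partial>M)"
  moreover obtain B :: "'a set set" where "precompact_basis B"
    using locally_compact_precompact_basis[OF assms(1)] by blast
  ultimately show "AE w in M. scaled_indicator_sup_measure (Y w)"
    using assms(3,4) by (intro precompact_basis.AE_scaled_indicator_sup_measure)
qed

end
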